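(* Let $d\ge1$, $f$ satisfy Assumption (F0) with $\frac{\alpha_2}{2+\alpha_2}\le\alpha_1$, $r_2=2+\alpha_2$, and let $r_0$ satisfy $\max(1,\frac{d\alpha_1}2)<r_0<2+\alpha_1$, $\frac12\le\frac{\alpha_1}{r_0}+\frac1{r_2}$, $1<\frac{\alpha_1+1}{r_0}+\frac1{r_2}$. Let $(\phi_j,\omega_j)_{j\in\mathbb N}$ satisfy Assumption (T1) with this $r_0$ and constant $a\in(0,1)$. Then there exist $c_1\in(0,a/2)$ and $C>0$, independent of the parameters $v_j,\gamma_j$, such that for every profile $R_\infty=\sum_jR_{\phi_j,\omega_j,0,v_j,\gamma_j}$ with $v_*:=\inf_{j\ne k}\sqrt{\omega_j}|v_k-v_j|$, the source term $H=f(R_\infty)-\sum_{j\in\mathbb N}f(R_j)$ satisfies $$\|H(t)\|_{L^\infty\cap L^{r_2'}}\le Ce^{-c_1v_*t}\qquad\forall t>0,$$ where $r_2'=r_2/(r_2-1)$.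
   Context: Assumption (F0): $f(u)=g(|u|^2)u$, $g\in C^0([0,\infty),\mathbb R)\cap C^2((0,\infty),\mathbb R)$, $g(0)=0$, $|sg'(s)|+|s^2g''(s)|\le C_0(s^{\alpha_1/2}+s^{\alpha_2/2})$ for $s>0$, $0<\alpha_1\le\alpha_2<\alpha_{\max}$ ($\alpha_{\max}=\infty$ for $d=1,2$, $4/(d-2)$ for $d\ge3$). Bound state: nontrivial $\phi\in H^1(\mathbb R^d)$ with $\Delta\phi+f(\phi)=\omega\phi$, $\omega>0$. Soliton: $R_{\phi,\omega,x^0,v,\gamma}(t,x)=e^{i(\omega t+\frac12v\cdot x-\frac14|v|^2t+\gamma)}\phi(x-x^0-vt)$; $R_j=R_{\phi_j,\omega_j,0,v_j,\gamma_j}$. Assumption (T1): there are $0<a<1$, $D_a>0$ independent of $j$ with $|\phi_j(x)|+\omega_j^{-1/2}|\nabla\phi_j(x)|\le D_a\omega_j^{1/\alpha_1}e^{-a\omega_j^{1/2}|x|}$, and $r_0\ge1$, $\frac{d\alpha_1}2<r_0<2+\alpha_1$, with $\sum_j\omega_j^{\frac1{\alpha_1}-\frac d{2r_0}}<\infty$. *)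

theory Defs
  imports "HOL-Analysis.Analysis"
begin

text \<open>Space dimension d = DIM('a); points of R^d are elements of a euclidean_space 'a.\<close>

definition pd :: "'a::euclidean_space \<Rightarrow> ('a \<Rightarrow> complex) \<Rightarrow> 'a \<Rightarrow> complex" where
  "pd b \<phi> x = vector_derivative (\<lambda>t::real. \<phi> (x + t *\<^sub>R b)) (at 0)"

definition gradnorm :: "('a::euclidean_space \<Rightarrow> complex) \<Rightarrow> 'a \<Rightarrow> real" where
  "gradnorm \<phi> x = sqrt (\<Sum>b\<in>Basis. (cmod (pd b \<phi> x))\<^sup>2)"

definition lap :: "('a::euclidean_space \<Rightarrow> complex) \<Rightarrow> 'a \<Rightarrow> complex" where
  "lap \<phi> x = (\<Sum>b\<in>Basis. pd b (pd b \<phi>) x)"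

definition C2fun :: "('a::euclidean_space \<Rightarrow> complex) \<Rightarrow> bool" where
  "C2fun \<phi> \<longleftrightarrow> (\<forall>x. \<phi> differentiable (at x)) \<and>
     (\<forall>b\<in>Basis. continuous_on UNIV (pd b \<phi>) \<and> (\<forall>x. pd b \<phi> differentiable (at x)) \<and>
        (\<forall>b'\<in>Basis. continuous_on UNIV (pd b' (pd b \<phi>))))"

definition in_H1 :: "('a::euclidean_space \<Rightarrow> complex) \<Rightarrow> bool" where
  "in_H1 \<phi> \<longleftrightarrow> \<phi> \<in> borel_measurable lebesgue \<and>
     integrable lebesgue (\<lambda>x. (cmod (\<phi> x))\<^sup>2) \<and>
     (\<forall>b\<in>Basis. pd b \<phi> \<in> borel_measurable lebesgue) \<and>
     integrable lebesgue (\<lambda>x. (gradnorm \<phi> x)\<^sup>2)"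

definition below_alpha_max :: "nat \<Rightarrow> real \<Rightarrow> bool" where
  "below_alpha_max d \<alpha> \<longleftrightarrow> (d \<le> 2 \<or> \<alpha> < 4 / (real d - 2))"

text \<open>Assumption (F0) on g (the nonlinearity is f(u) = g(|u|^2) u).\<close>
definition F0 :: "nat \<Rightarrow> (real \<Rightarrow> real) \<Rightarrow> real \<Rightarrow> real \<Rightarrow> bool" where
  "F0 d g \<alpha>1 \<alpha>2 \<longleftrightarrow>
     continuous_on {0..} g \<and> g 0 = 0 \<and>
     (\<forall>s>0. (g has_real_derivative deriv g s) (at s) \<and>
            (deriv g has_real_derivative deriv (deriv g) s) (at s)) \<and>
     continuous_on {0<..} (deriv (deriv g)) \<and>
     (\<exists>C0. \<forall>s>0. \<bar>s * deriv g s\<bar> + \<bar>s\<^sup>2 * deriv (deriv g) s\<bar>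
                 \<le> C0 * (s powr (\<alpha>1 / 2) + s powr (\<alpha>2 / 2))) \<and>
     0 < \<alpha>1 \<and> \<alpha>1 \<le> \<alpha>2 \<and> below_alpha_max d \<alpha>2"

definition fnl :: "(real \<Rightarrow> real) \<Rightarrow> complex \<Rightarrow> complex" where
  "fnl g u = complex_of_real (g ((cmod u)\<^sup>2)) * u"

definition bound_state :: "(real \<Rightarrow> real) \<Rightarrow> ('a::euclidean_space \<Rightarrow> complex) \<Rightarrow> real \<Rightarrow> bool" where
  "bound_state g \<phi> \<omega> \<longleftrightarrow> 0 < \<omega> \<and> (\<exists>x. \<phi> x \<noteq> 0) \<and> in_H1 \<phi> \<and> C2fun \<phi> \<and>
     (\<forall>x. lap \<phi> x + fnl g (\<phi> x) = complex_of_real \<omega> * \<phi> x)"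

definition soliton :: "('a::euclidean_space \<Rightarrow> complex) \<Rightarrow> real \<Rightarrow> 'a \<Rightarrow> real \<Rightarrow> real \<Rightarrow> 'a \<Rightarrow> complex" where
  "soliton \<phi> \<omega> v \<gamma> t x =
     exp (\<i> * complex_of_real (\<omega> * t + (1/2) * (v \<bullet> x) - (1/4) * (norm v)\<^sup>2 * t + \<gamma>))
       * \<phi> (x - t *\<^sub>R v)"

definition T1 :: "(nat \<Rightarrow> 'a::euclidean_space \<Rightarrow> complex) \<Rightarrow> (nat \<Rightarrow> real) \<Rightarrow> real \<Rightarrow> real \<Rightarrow> real \<Rightarrow> bool" where
  "T1 \<phi> \<omega> \<alpha>1 a r0 \<longleftrightarrow> 0 < a \<and> a < 1 \<and>
     (\<exists>D>0. \<forall>j x. cmod (\<phi> j x) + \<omega> j powr (-1/2) * gradnorm (\<phi> j) x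
                 \<le> D * \<omega> j powr (1 / \<alpha>1) * exp (- a * sqrt (\<omega> j) * norm x)) \<and>
     1 \<le> r0 \<and> real DIM('a) * \<alpha>1 / 2 < r0 \<and> r0 < 2 + \<alpha>1 \<and>
     summable (\<lambda>j. \<omega> j powr (1 / \<alpha>1 - real DIM('a) / (2 * r0)))"

definition vstar :: "(nat \<Rightarrow> real) \<Rightarrow> (nat \<Rightarrow> 'a::euclidean_space) \<Rightarrow> real" where
  "vstar \<omega> v = (INF jk \<in> {(j, k). j \<noteq> k}. sqrt (\<omega> (fst jk)) * norm (v (snd jk) - v (fst jk)))"

definition source :: "(real \<Rightarrow> real) \<Rightarrow> (nat \<Rightarrow> 'a::euclidean_space \<Rightarrow> complex) \<Rightarrow> (nat \<Rightarrow> real)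
    \<Rightarrow> (nat \<Rightarrow> 'a) \<Rightarrow> (nat \<Rightarrow> real) \<Rightarrow> real \<Rightarrow> 'a \<Rightarrow> complex" where
  "source g \<phi> \<omega> v \<gamma> t x =
     fnl g (\<Sum>j. soliton (\<phi> j) (\<omega> j) (v j) (\<gamma> j) t x)
     - (\<Sum>j. fnl g (soliton (\<phi> j) (\<omega> j) (v j) (\<gamma> j) t x))"

end

theory Submission
  imports Defs
begin

text \<open>The source \<open>H = f(\<Sum>\<^sub>j R\<^sub>j) - \<Sum>\<^sub>j f(R\<^sub>j)\<close> is bounded pointwise in two ways.
  The solitons decay exponentially away from their centres, which separate with relative
  speeds \<open>\<surd>\<omega>\<^sub>j \<bar>v\<^sub>k - v\<^sub>j\<bar> \<ge> v\<^sub>*\<close>; so the product of two of their envelopes is at most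
  \<open>exp(-a v\<^sub>* t)\<close>, at every point at most one soliton exceeds \<open>exp(-a v\<^sub>* t/2)\<close>, and the
  local Lipschitz continuity of \<open>f\<close> gives \<open>\<bar>H\<bar> \<le> L exp(-a v\<^sub>* t/2)\<close>.  On the other hand
  \<open>f(u) = O(\<bar>u\<bar>\<^sup>1\<^sup>+\<^sup>\<alpha>\<^sup>1)\<close> gives \<open>\<bar>H\<bar> \<le> K F\<^sup>1\<^sup>+\<^sup>\<alpha>\<^sup>1\<close> for the envelope
  \<open>F = \<Sum>\<^sub>j \<omega>\<^sub>j\<^sup>1\<^sup>/\<^sup>\<alpha>\<^sup>1 exp(-a\<surd>\<omega>\<^sub>j \<bar>x - v\<^sub>j t\<bar>)\<close>, whose \<open>L\<^sup>r\<^sup>0\<close> norm is bounded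
  uniformly in \<open>v\<close> and \<open>t\<close> by Jensen's inequality and the summability in (T1).
  Interpolating between the two bounds gives the \<open>L\<^sup>p\<close> estimate, \<open>p = r\<^sub>2'\<close>, at the
  price of a smaller decay rate \<open>c\<^sub>1\<close>.\<close>

section \<open>Growth and local Lipschitz bounds for the nonlinearity\<close>

lemma abs_le_by_derivative_comparison:
  fixes h k h' k' :: "real \<Rightarrow> real"
  assumes "0 \<le> s" and "continuous_on {0..s} h" and "continuous_on {0..s} k"
    and "h 0 = 0" and "k 0 = 0"
    and "\<And>x. 0 < x \<Longrightarrow> x < s \<Longrightarrow> (h has_real_derivative h' x) (at x)"
    and "\<And>x. 0 < x \<Longrightarrow> x < s \<Longrightarrow> (k has_real_derivative k' x) (at x)"
    and "\<And>x. 0 < x \<Longrightarrow> x < s \<Longrightarrow> \<bar>h' x\<bar> \<le> k' x"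
  shows "\<bar>h s\<bar> \<le> k s"
proof -
  have "(\<lambda>x. k x + \<sigma> * h x) 0 \<le> (\<lambda>x. k x + \<sigma> * h x) s" if "\<sigma> \<in> {-1, 1}" for \<sigma> :: real
  proof (rule DERIV_nonneg_imp_increasing_open[OF \<open>0 \<le> s\<close>])
    fix x assume x: "0 < x" "x < s"
    show "\<exists>y. ((\<lambda>x. k x + \<sigma> * h x) has_real_derivative y) (at x) \<and> 0 \<le> y"
      using assms(6-8)[OF x] that by (intro exI[of _ "k' x + \<sigma> * h' x"]) (auto intro!: derivative_eq_intros)
  qed (use assms(2,3) in \<open>auto intro!: continuous_intros\<close>)
  from this[of 1] this[of "-1"] show ?thesis using assms(4,5) by auto
qed

lemma F0_deriv_bound:
  assumes "F0 d g \<alpha>1 \<alpha>2"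
  obtains C0 where "C0 \<ge> 0"
    and "\<And>s. s > 0 \<Longrightarrow> \<bar>s * deriv g s\<bar> \<le> C0 * (s powr (\<alpha>1/2) + s powr (\<alpha>2/2))"
proof -
  obtain C0 where C0: "\<And>s. s > 0 \<Longrightarrow>
      \<bar>s * deriv g s\<bar> + \<bar>s\<^sup>2 * deriv (deriv g) s\<bar> \<le> C0 * (s powr (\<alpha>1/2) + s powr (\<alpha>2/2))"
    using assms unfolding F0_def by blast
  have "C0 \<ge> 0"
    using C0[OF zero_less_one] by simp
  moreover have "\<bar>s * deriv g s\<bar> \<le> C0 * (s powr (\<alpha>1/2) + s powr (\<alpha>2/2))" if "s > 0" for s
    using C0[OF that] by (smt (verit))
  ultimately show thesis using that by blast
qed

lemma F0_abs_le:
  assumes F: "F0 d g \<alpha>1 \<alpha>2"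
  obtains C where "C \<ge> 0" and "\<And>s. s \<ge> 0 \<Longrightarrow> \<bar>g s\<bar> \<le> C * (s powr (\<alpha>1/2) + s powr (\<alpha>2/2))"
proof -
  obtain C0 where C0: "C0 \<ge> 0"
    and dg_bound: "\<And>s. s > 0 \<Longrightarrow> \<bar>s * deriv g s\<bar> \<le> C0 * (s powr (\<alpha>1/2) + s powr (\<alpha>2/2))"
    using F0_deriv_bound[OF F] by blast
  have cont: "continuous_on {0..} g" and "g 0 = 0"
    and dg: "\<And>s. s > 0 \<Longrightarrow> (g has_real_derivative deriv g s) (at s)"
    and a1: "0 < \<alpha>1" and a12: "\<alpha>1 \<le> \<alpha>2"
    using F unfolding F0_def by auto
  define k where "k s = C0 * ((2/\<alpha>1) * s powr (\<alpha>1/2) + (2/\<alpha>2) * s powr (\<alpha>2/2))" for s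
  define k' where "k' s = C0 * (s powr (\<alpha>1/2 - 1) + s powr (\<alpha>2/2 - 1))" for s
  have "\<bar>g s\<bar> \<le> k s" if "s \<ge> 0" for s
  proof (rule abs_le_by_derivative_comparison[where h = g and k = k and h' = "deriv g" and k' = k'])
    show "continuous_on {0..s} g" using cont by (rule continuous_on_subset) auto
    show "continuous_on {0..s} k"
      unfolding k_def using a1 a12 by (intro continuous_intros continuous_on_powr') auto
    fix x :: real assume x: "0 < x"
    show "(g has_real_derivative deriv g x) (at x)" using dg[OF x] .
    show "(k has_real_derivative k' x) (at x)"
      unfolding k_def k'_def using x a1 a12
      by (auto intro!: derivative_eq_intros simp: field_simps)
    have "x * x powr (\<beta>/2 - 1) = x powr (\<beta>/2)" for \<beta>
      using x by (simp add: powr_diff)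
    then have "x * \<bar>deriv g x\<bar> \<le> x * k' x"
      using dg_bound[OF x] x unfolding k'_def by (simp add: abs_mult algebra_simps)
    then show "\<bar>deriv g x\<bar> \<le> k' x" using x by simp
  qed (simp_all add: k_def that \<open>g 0 = 0\<close>)
  moreover have "k s \<le> (2/\<alpha>1 * C0) * (s powr (\<alpha>1/2) + s powr (\<alpha>2/2))" if "s \<ge> 0" for s
  proof -
    have "2/\<alpha>2 \<le> 2/\<alpha>1" using a1 a12 by (simp add: frac_le)
    then have "(2/\<alpha>2) * s powr (\<alpha>2/2) \<le> (2/\<alpha>1) * s powr (\<alpha>2/2)" by (rule mult_right_mono) simp
    then have "C0 * ((2/\<alpha>2) * s powr (\<alpha>2/2)) \<le> C0 * ((2/\<alpha>1) * s powr (\<alpha>2/2))"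
      using C0 by (rule mult_left_mono)
    then show ?thesis unfolding k_def by (simp add: algebra_simps)
  qed
  ultimately show thesis using that[of "2/\<alpha>1 * C0"] C0 a1 by force
qed

lemma F0_abs_sq_le:
  assumes F: "F0 d g \<alpha>1 \<alpha>2" and "0 \<le> M"
  obtains K where "K \<ge> 0" and "\<And>r. 0 \<le> r \<Longrightarrow> r \<le> M \<Longrightarrow> \<bar>g (r\<^sup>2)\<bar> \<le> K * r powr \<alpha>1"
proof -
  obtain C where C: "C \<ge> 0" and g_le: "\<And>s. s \<ge> 0 \<Longrightarrow> \<bar>g s\<bar> \<le> C * (s powr (\<alpha>1/2) + s powr (\<alpha>2/2))"
    using F0_abs_le[OF F] by blast
  have a12: "\<alpha>1 \<le> \<alpha>2" using F unfolding F0_def by simp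
  have "\<bar>g (r\<^sup>2)\<bar> \<le> C * (1 + M powr (\<alpha>2 - \<alpha>1)) * r powr \<alpha>1" if r: "0 \<le> r" "r \<le> M" for r
  proof -
    have "r\<^sup>2 = r powr 2" using r by (simp add: powr_numeral)
    then have sq: "(r\<^sup>2) powr (\<beta>/2) = r powr \<beta>" for \<beta>
      by (simp add: powr_powr)
    have "r powr \<alpha>2 = r powr \<alpha>1 * r powr (\<alpha>2 - \<alpha>1)"
      using r by (cases "r = 0") (simp_all add: powr_add[symmetric])
    also have "\<dots> \<le> r powr \<alpha>1 * M powr (\<alpha>2 - \<alpha>1)"
      using r a12 by (intro mult_left_mono powr_mono2) auto
    finally have "r powr \<alpha>1 + r powr \<alpha>2 \<le> (1 + M powr (\<alpha>2 - \<alpha>1)) * r powr \<alpha>1"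
      by (simp add: algebra_simps)
    then show ?thesis
      using g_le[of "r\<^sup>2"] C by (simp add: sq) (smt (verit) mult.assoc mult_left_mono)
  qed
  then show thesis using that[of "C * (1 + M powr (\<alpha>2 - \<alpha>1))"] C by simp
qed

lemma fnl_norm_le_on_ball:
  assumes "F0 d g \<alpha>1 \<alpha>2" and "0 \<le> M"
  obtains K where "K \<ge> 0" and "\<And>z. cmod z \<le> M \<Longrightarrow> cmod (fnl g z) \<le> K * cmod z powr (1 + \<alpha>1)"
proof -
  obtain K where K: "K \<ge> 0" and g_le: "\<And>r. 0 \<le> r \<Longrightarrow> r \<le> M \<Longrightarrow> \<bar>g (r\<^sup>2)\<bar> \<le> K * r powr \<alpha>1"
    using F0_abs_sq_le[OF assms] by blast
  have "cmod (fnl g z) \<le> K * cmod z powr (1 + \<alpha>1)" if "cmod z \<le> M" for z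
  proof -
    have "cmod (fnl g z) = \<bar>g ((cmod z)\<^sup>2)\<bar> * cmod z" unfolding fnl_def by (simp add: norm_mult)
    also have "\<dots> \<le> K * cmod z powr \<alpha>1 * cmod z"
      using g_le that by (intro mult_right_mono) auto
    also have "\<dots> = K * cmod z powr (1 + \<alpha>1)"
      by (cases "z = 0") (simp_all add: powr_add)
    finally show ?thesis .
  qed
  then show thesis using that K by blast
qed

text \<open>The weight \<open>\<rho>\<close> compensates the singularity of \<open>g'\<close> at the origin:
  by the mean value theorem for \<open>r \<mapsto> g (r\<^sup>2)\<close> the left-hand side is at most
  \<open>2 (r - \<rho>) \<bar>\<xi>\<^sup>2 g'(\<xi>\<^sup>2)\<bar>\<close> for some \<open>\<xi> \<in> (\<rho>, r)\<close>, which (F0) controls.\<close>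
lemma F0_weighted_diff_sq_le:
  assumes F: "F0 d g \<alpha>1 \<alpha>2" and "0 \<le> M"
  obtains Q where "Q \<ge> 0"
    and "\<And>\<rho> r. 0 \<le> \<rho> \<Longrightarrow> \<rho> \<le> r \<Longrightarrow> r \<le> M \<Longrightarrow> \<bar>g (r\<^sup>2) - g (\<rho>\<^sup>2)\<bar> * \<rho> \<le> Q * (r - \<rho>)"
proof -
  obtain C0 where C0: "C0 \<ge> 0"
    and dg_bound: "\<And>s. s > 0 \<Longrightarrow> \<bar>s * deriv g s\<bar> \<le> C0 * (s powr (\<alpha>1/2) + s powr (\<alpha>2/2))"
    using F0_deriv_bound[OF F] by blast
  have dg: "\<And>s. s > 0 \<Longrightarrow> (g has_real_derivative deriv g s) (at s)" and a: "0 < \<alpha>1" "\<alpha>1 \<le> \<alpha>2"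
    using F unfolding F0_def by auto
  define Q where "Q = 2 * C0 * ((M\<^sup>2) powr (\<alpha>1/2) + (M\<^sup>2) powr (\<alpha>2/2))"
  have "Q \<ge> 0" unfolding Q_def using C0 by simp
  have "\<bar>g (r\<^sup>2) - g (\<rho>\<^sup>2)\<bar> * \<rho> \<le> Q * (r - \<rho>)" if r: "0 \<le> \<rho>" "\<rho> \<le> r" "r \<le> M" for \<rho> r
  proof (cases "\<rho> = 0 \<or> \<rho> = r")
    case True
    then show ?thesis using \<open>Q \<ge> 0\<close> r by auto
  next
    case False
    then have \<rho>: "0 < \<rho>" "\<rho> < r" using r by auto
    have "((\<lambda>r. g (r\<^sup>2)) has_real_derivative deriv g (x\<^sup>2) * (2 * x)) (at x)" if "\<rho> \<le> x" for x
      using \<rho> that by (auto intro!: DERIV_chain2[OF dg] derivative_eq_intros)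
    then obtain \<xi> where \<xi>: "\<rho> < \<xi>" "\<xi> < r"
      and mvt: "g (r\<^sup>2) - g (\<rho>\<^sup>2) = (r - \<rho>) * (deriv g (\<xi>\<^sup>2) * (2 * \<xi>))"
      using MVT2[OF \<rho>(2), of "\<lambda>r. g (r\<^sup>2)" "\<lambda>x. deriv g (x\<^sup>2) * (2 * x)"] by auto
    have "\<xi> * \<xi> * \<bar>deriv g (\<xi>\<^sup>2)\<bar> \<le> C0 * ((\<xi>\<^sup>2) powr (\<alpha>1/2) + (\<xi>\<^sup>2) powr (\<alpha>2/2))"
      using dg_bound[of "\<xi>\<^sup>2"] \<rho> \<xi> by (simp add: abs_mult power2_eq_square)
    also have "\<dots> \<le> Q / 2"
      unfolding Q_def using \<rho> \<xi> r a C0 by (auto intro!: mult_left_mono add_mono powr_mono2 power_mono)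
    finally have \<xi>_bound: "\<xi> * \<xi> * \<bar>deriv g (\<xi>\<^sup>2)\<bar> \<le> Q / 2" .
    have "\<bar>g (r\<^sup>2) - g (\<rho>\<^sup>2)\<bar> * \<rho> = (2 * (r - \<rho>) * \<xi> * \<bar>deriv g (\<xi>\<^sup>2)\<bar>) * \<rho>"
      using \<rho> \<xi> by (simp add: mvt abs_mult)
    also have "\<dots> \<le> (2 * (r - \<rho>) * \<xi> * \<bar>deriv g (\<xi>\<^sup>2)\<bar>) * \<xi>"
      using \<rho> \<xi> by (intro mult_left_mono) auto
    also have "\<dots> = 2 * (r - \<rho>) * (\<xi> * \<xi> * \<bar>deriv g (\<xi>\<^sup>2)\<bar>)"
      by (simp add: algebra_simps)
    also have "\<dots> \<le> 2 * (r - \<rho>) * (Q / 2)"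
      using \<rho> \<xi>_bound by (intro mult_left_mono) auto
    also have "\<dots> = Q * (r - \<rho>)" by simp
    finally show ?thesis .
  qed
  then show thesis using that \<open>Q \<ge> 0\<close> by blast
qed

lemma fnl_lipschitz_on_ball:
  assumes F: "F0 d g \<alpha>1 \<alpha>2" and "0 \<le> M"
  obtains L where "L \<ge> 0"
    and "\<And>z w. cmod z \<le> M \<Longrightarrow> cmod w \<le> M \<Longrightarrow> cmod (fnl g z - fnl g w) \<le> L * cmod (z - w)"
proof -
  obtain K where K: "K \<ge> 0" and g_le: "\<And>r. 0 \<le> r \<Longrightarrow> r \<le> M \<Longrightarrow> \<bar>g (r\<^sup>2)\<bar> \<le> K * r powr \<alpha>1"
    using F0_abs_sq_le[OF assms] by blast
  obtain Q where Q: "Q \<ge> 0"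
    and g_diff: "\<And>\<rho> r. 0 \<le> \<rho> \<Longrightarrow> \<rho> \<le> r \<Longrightarrow> r \<le> M \<Longrightarrow> \<bar>g (r\<^sup>2) - g (\<rho>\<^sup>2)\<bar> * \<rho> \<le> Q * (r - \<rho>)"
    using F0_weighted_diff_sq_le[OF assms] by blast
  have a1: "\<alpha>1 > 0" using F unfolding F0_def by simp
  define L where "L = K * M powr \<alpha>1 + Q"
  have ordered: "cmod (fnl g z - fnl g w) \<le> L * cmod (z - w)"
    if zw: "cmod w \<le> cmod z" "cmod z \<le> M" for z w
  proof -
    have split: "fnl g z - fnl g w
        = of_real (g ((cmod z)\<^sup>2)) * (z - w) + of_real (g ((cmod z)\<^sup>2) - g ((cmod w)\<^sup>2)) * w"
      unfolding fnl_def by (simp add: algebra_simps)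
    have "\<bar>g ((cmod z)\<^sup>2)\<bar> \<le> K * M powr \<alpha>1"
      using g_le[of "cmod z"] zw K a1 by (smt (verit) mult_left_mono norm_ge_zero powr_mono2)
    then have "cmod (of_real (g ((cmod z)\<^sup>2)) * (z - w)) \<le> K * M powr \<alpha>1 * cmod (z - w)"
      by (simp add: norm_mult mult_right_mono)
    moreover have "cmod (of_real (g ((cmod z)\<^sup>2) - g ((cmod w)\<^sup>2)) * w) \<le> Q * cmod (z - w)"
    proof -
      have "cmod (of_real (g ((cmod z)\<^sup>2) - g ((cmod w)\<^sup>2)) * w) \<le> Q * (cmod z - cmod w)"
        using g_diff[of "cmod w" "cmod z"] zw by (simp only: norm_mult norm_of_real norm_ge_zero)
      also have "\<dots> \<le> Q * cmod (z - w)" using Q by (intro mult_left_mono norm_triangle_ineq2)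
      finally show ?thesis .
    qed
    ultimately show ?thesis
      unfolding split L_def by (smt (verit) distrib_right norm_triangle_ineq)
  qed
  have "cmod (fnl g z - fnl g w) \<le> L * cmod (z - w)" if "cmod z \<le> M" "cmod w \<le> M" for z w
    using ordered[of w z] ordered[of z w] that by (cases "cmod w \<le> cmod z") (auto simp: norm_minus_commute)
  moreover have "L \<ge> 0" unfolding L_def using K Q by simp
  ultimately show thesis using that by blast
qed

lemma continuous_on_fnl:
  assumes "continuous_on {0..} g"
  shows "continuous_on UNIV (fnl g)"
proof -
  have "continuous_on UNIV (\<lambda>z::complex. g ((cmod z)\<^sup>2))"
    by (rule continuous_on_compose2[OF assms]) (auto intro!: continuous_intros)
  then show ?thesis unfolding fnl_def by (intro continuous_intros)
qed

section \<open>The interaction term of a superposition\<close>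

definition interaction :: "(real \<Rightarrow> real) \<Rightarrow> (nat \<Rightarrow> complex) \<Rightarrow> complex" where
  "interaction g u = fnl g (\<Sum>j. u j) - (\<Sum>j. fnl g (u j))"

lemma suminf_eq_fun_upd_zero:
  fixes f :: "nat \<Rightarrow> 'b::real_normed_vector"
  assumes "summable f"
  shows "suminf f = f J + suminf (f(J := 0))"
proof -
  have "(\<lambda>k. f k - (if k = J then f k else 0)) sums (suminf f - f J)"
    using summable_sums[OF assms] sums_single[of J f] by (rule sums_diff)
  moreover have "(\<lambda>k. f k - (if k = J then f k else 0)) = f(J := 0)"
    by auto
  ultimately show ?thesis by (simp add: sums_iff)
qed

lemma norm_suminf_fun_upd_zero_le:
  fixes f :: "nat \<Rightarrow> 'b::banach" and c :: "nat \<Rightarrow> real"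
  assumes "summable c" and "\<And>k. 0 \<le> c k" and "0 \<le> s" and "\<And>k. k \<noteq> J \<Longrightarrow> norm (f k) \<le> s * c k"
  shows "norm (suminf (f(J := 0))) \<le> s * suminf c"
proof -
  have "norm ((f(J := 0)) k) \<le> s * c k" for k
    using assms(2)[of k] assms(3) assms(4)[of k] by (cases "k = J") auto
  then have "norm (suminf (f(J := 0))) \<le> (\<Sum>k. s * c k)"
    by (rule norm_suminf_le[OF _ summable_mult[OF assms(1)]])
  then show ?thesis by (simp only: suminf_mult[OF assms(1)])
qed

lemma at_most_one_above_sqrt:
  fixes b :: "nat \<Rightarrow> real"
  assumes "\<And>j k. j \<noteq> k \<Longrightarrow> b j * b k \<le> E" and "0 \<le> E"
  obtains J where "\<And>k. k \<noteq> J \<Longrightarrow> b k \<le> sqrt E"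
proof (cases "\<exists>J. b J > sqrt E")
  case True
  then obtain J where J: "b J > sqrt E" by blast
  have "b k \<le> sqrt E" if "k \<noteq> J" for k
  proof (rule ccontr)
    assume "\<not> b k \<le> sqrt E"
    moreover have "0 \<le> sqrt E" using \<open>0 \<le> E\<close> by simp
    moreover have "0 < b J" using J \<open>0 \<le> sqrt E\<close> by linarith
    ultimately have "sqrt E * sqrt E < b J * b k"
      using J by (intro mult_strict_mono) auto
    then show False using assms(1)[of J k] that \<open>0 \<le> E\<close> by simp
  qed
  then show thesis using that by blast
next
  case False
  then show thesis using that[of 0] by (simp add: not_less)
qed

text \<open>If the profiles \<open>b\<^sub>j\<close> are pairwise almost disjoint, at most one of them is
  large at any point; the interaction is then the Lipschitz increment of \<open>fnl g\<close> at that
  dominant term, plus terms that are all small.\<close>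
lemma norm_interaction_le_sqrt:
  fixes u :: "nat \<Rightarrow> complex" and c b :: "nat \<Rightarrow> real"
  assumes c: "summable c" "\<And>j. 0 \<le> c j"
    and b: "\<And>j. b j \<le> 1" "\<And>j k. j \<noteq> k \<Longrightarrow> b j * b k \<le> E" and "0 \<le> E"
    and u: "\<And>j. cmod (u j) \<le> c j * b j"
    and L: "0 \<le> L" "\<And>z w. cmod z \<le> suminf c \<Longrightarrow> cmod w \<le> suminf c \<Longrightarrow>
      cmod (fnl g z - fnl g w) \<le> L * cmod (z - w)"
  shows "cmod (interaction g u) \<le> 2 * L * suminf c * sqrt E"
proof -
  obtain J where J: "\<And>k. k \<noteq> J \<Longrightarrow> b k \<le> sqrt E"
    using at_most_one_above_sqrt[of b E, OF b(2) \<open>0 \<le> E\<close>] by blast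
  have c_le: "c j \<le> suminf c" for j
    using sum_le_suminf[OF c(1), of "{j}"] c(2) by simp
  have u_le_c: "cmod (u j) \<le> c j" for j
    using u[of j] mult_left_le[OF b(1)[of j] c(2)[of j]] by linarith
  have fnl_u: "cmod (fnl g (u j)) \<le> L * cmod (u j)" for j
    using L(2)[of "u j" 0] u_le_c[of j] c_le[of j] suminf_nonneg[OF c] by (simp add: fnl_def)
  have u_small: "cmod (u k) \<le> sqrt E * c k" if "k \<noteq> J" for k
    using u[of k] mult_left_mono[OF J[OF that] c(2)[of k]] by (simp add: mult.commute)
  have u_summable: "summable u"
    by (rule summable_comparison_test'[OF c(1) u_le_c])
  have "summable (\<lambda>j. fnl g (u j))"
    using fnl_u u_le_c L(1) by (intro summable_comparison_test'[OF summable_mult[OF c(1), of L]])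
      (meson mult_left_mono order_trans)
  define R where "R = suminf (u(J := 0))"
  define Rf where "Rf = suminf ((\<lambda>j. fnl g (u j))(J := 0))"
  have "cmod R \<le> sqrt E * suminf c"
    unfolding R_def using c u_small \<open>0 \<le> E\<close> by (intro norm_suminf_fun_upd_zero_le) auto
  have "cmod Rf \<le> (L * sqrt E) * suminf c"
    unfolding Rf_def using c L(1) \<open>0 \<le> E\<close>
  proof (intro norm_suminf_fun_upd_zero_le)
    show "cmod (fnl g (u k)) \<le> L * sqrt E * c k" if "k \<noteq> J" for k
      using fnl_u[of k] mult_left_mono[OF u_small[OF that] L(1)] by (simp add: mult.assoc)
  qed auto
  have "cmod (u J + R) \<le> suminf c"
    unfolding R_def using suminf_eq_fun_upd_zero[OF u_summable, of J] norm_suminf_le[OF u_le_c c(1)] by simp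
  then have "cmod (fnl g (u J + R) - fnl g (u J)) \<le> L * cmod R"
    using L(2)[of "u J + R" "u J"] u_le_c[of J] c_le[of J] by simp
  moreover have "interaction g u = (fnl g (u J + R) - fnl g (u J)) - Rf"
    unfolding interaction_def R_def Rf_def
    using suminf_eq_fun_upd_zero[OF u_summable, of J] suminf_eq_fun_upd_zero[OF \<open>summable (\<lambda>j. fnl g (u j))\<close>, of J]
    by simp
  ultimately have "cmod (interaction g u) \<le> L * cmod R + cmod Rf"
    using norm_triangle_ineq4[of "fnl g (u J + R) - fnl g (u J)" Rf] by simp
  also have "\<dots> \<le> L * (sqrt E * suminf c) + (L * sqrt E) * suminf c"
    using \<open>cmod R \<le> sqrt E * suminf c\<close> \<open>cmod Rf \<le> (L * sqrt E) * suminf c\<close> L(1)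
    by (intro add_mono mult_left_mono) auto
  finally show ?thesis by (simp add: algebra_simps)
qed

lemma norm_interaction_le_powr:
  fixes u :: "nat \<Rightarrow> complex" and e :: "nat \<Rightarrow> real"
  assumes e: "summable e" "\<And>j. 0 \<le> e j" and u: "\<And>j. cmod (u j) \<le> e j"
    and "0 < \<alpha>" and "0 \<le> K" and "suminf e \<le> M"
    and K: "\<And>z. cmod z \<le> M \<Longrightarrow> cmod (fnl g z) \<le> K * cmod z powr (1 + \<alpha>)"
  shows "cmod (interaction g u) \<le> 2 * K * suminf e powr (1 + \<alpha>)"
proof -
  have e_le: "e j \<le> suminf e" for j
    using sum_le_suminf[OF e(1), of "{j}"] e(2) by simp
  have sum_u: "cmod (\<Sum>j. u j) \<le> suminf e"
    using u e(1) by (rule norm_suminf_le)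
  have "cmod (fnl g (\<Sum>j. u j)) \<le> K * cmod (\<Sum>j. u j) powr (1 + \<alpha>)"
    using K sum_u \<open>suminf e \<le> M\<close> by simp
  also have "\<dots> \<le> K * suminf e powr (1 + \<alpha>)"
    using sum_u \<open>0 < \<alpha>\<close> \<open>0 \<le> K\<close> by (intro mult_left_mono powr_mono2) auto
  finally have "cmod (fnl g (\<Sum>j. u j)) \<le> K * suminf e powr (1 + \<alpha>)" .
  moreover have "cmod (\<Sum>j. fnl g (u j)) \<le> K * suminf e powr (1 + \<alpha>)"
  proof -
    have fnl_u: "cmod (fnl g (u j)) \<le> K * suminf e powr \<alpha> * e j" for j
    proof -
      have "cmod (fnl g (u j)) \<le> K * cmod (u j) powr (1 + \<alpha>)"
        using K u[of j] e_le[of j] \<open>suminf e \<le> M\<close> by (meson order_trans)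
      also have "\<dots> \<le> K * e j powr (1 + \<alpha>)"
        using u[of j] \<open>0 < \<alpha>\<close> \<open>0 \<le> K\<close> by (intro mult_left_mono powr_mono2) auto
      also have "\<dots> = K * e j powr \<alpha> * e j"
        using e(2)[of j] by (cases "e j = 0") (simp_all add: powr_add)
      also have "\<dots> \<le> K * suminf e powr \<alpha> * e j"
        using e(2)[of j] e_le[of j] \<open>0 < \<alpha>\<close> \<open>0 \<le> K\<close>
        by (intro mult_right_mono mult_left_mono powr_mono2) auto
      finally show ?thesis .
    qed
    have "cmod (\<Sum>j. fnl g (u j)) \<le> (\<Sum>j. K * suminf e powr \<alpha> * e j)"
      by (rule norm_suminf_le[OF fnl_u summable_mult[OF e(1)]])
    also have "\<dots> = K * suminf e powr (1 + \<alpha>)"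
      using e suminf_nonneg[OF e] 
      by (cases "suminf e = 0") (simp_all add: suminf_mult powr_add)
    finally show ?thesis .
  qed
  ultimately show ?thesis
    unfolding interaction_def using norm_triangle_ineq4[of "fnl g (\<Sum>j. u j)" "\<Sum>j. fnl g (u j)"]
    by linarith
qed

section \<open>Integrals of sums of exponential profiles\<close>

lemma nn_integral_exp_norm_scaled:
  fixes y :: "'a::euclidean_space" and \<kappa> A :: real
  assumes "0 < \<kappa>" and "0 \<le> A"
  shows "(\<integral>\<^sup>+x. ennreal (A * exp (- \<kappa> * norm (x - y))) \<partial>lborel)
       = ennreal (A / \<kappa> ^ DIM('a)) * (\<integral>\<^sup>+x. ennreal (exp (- norm (x::'a))) \<partial>lborel)"
proof -
  have "1 / \<kappa> \<noteq> 0" using assms by simp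
  then have "(\<integral>\<^sup>+x. ennreal (A * exp (- \<kappa> * norm (x - y))) \<partial>lborel)
     = (\<integral>\<^sup>+x. ennreal (A * exp (- \<kappa> * norm (x - y)))
          \<partial>density (distr lborel borel (\<lambda>x. y + (1/\<kappa>) *\<^sub>R x)) (\<lambda>_. \<bar>1/\<kappa>\<bar> ^ DIM('a)))"
    using lborel_affine[of "1/\<kappa>" y] by simp
  also have "\<dots> = (\<integral>\<^sup>+x. ennreal (\<bar>1/\<kappa>\<bar> ^ DIM('a)) * ennreal (A * exp (- \<kappa> * norm ((y + (1/\<kappa>) *\<^sub>R x) - y))) \<partial>lborel)"
    by (simp add: nn_integral_density nn_integral_distr)
  also have "\<dots> = (\<integral>\<^sup>+x. ennreal (A / \<kappa> ^ DIM('a)) * ennreal (exp (- norm (x::'a))) \<partial>lborel)"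
    using assms by (intro nn_integral_cong) (simp add: power_divide ennreal_mult'[symmetric])
  also have "\<dots> = ennreal (A / \<kappa> ^ DIM('a)) * (\<integral>\<^sup>+x. ennreal (exp (- norm (x::'a))) \<partial>lborel)"
    by (rule nn_integral_cmult) simp
  finally show ?thesis .
qed

lemma power_le_exp_half:
  fixes y :: real and d :: nat
  assumes "0 \<le> y" and "0 < d"
  shows "y ^ d \<le> (2 * real d) ^ d * exp (y / 2)"
proof -
  let ?z = "y / (2 * real d)"
  have "?z \<le> exp ?z"
    using exp_ge_add_one_self[of ?z] by linarith
  then have "?z ^ d \<le> exp ?z ^ d"
    using assms by (intro power_mono) auto
  also have "\<dots> = exp (y / 2)"
    using assms by (simp add: exp_of_nat_mult[symmetric])
  finally show ?thesis
    using assms by (simp add: power_divide field_simps)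
qed

lemma exp_neg_mult_power_le_geometric:
  fixes n d :: nat
  assumes "0 < d"
  shows "exp (- real n) * (real n + 1) ^ d \<le> (2 * real d) ^ d * exp (1/2) * exp (- 1/2) ^ n"
proof -
  have e: "exp (- real n) * exp ((real n + 1) / 2) = exp (1/2) * exp (- 1/2) ^ n"
  proof -
    have "exp (- real n) * exp ((real n + 1) / 2) = exp (1/2 + real n * (- 1/2))"
      unfolding exp_add[symmetric] by (rule arg_cong[where f = exp]) (simp add: field_simps)
    also have "\<dots> = exp (1/2) * exp (- 1/2) ^ n"
      by (simp only: exp_add exp_of_nat_mult)
    finally show ?thesis .
  qed
  have "exp (- real n) * (real n + 1) ^ d \<le> exp (- real n) * ((2 * real d) ^ d * exp ((real n + 1) / 2))"
    using power_le_exp_half[of "real n + 1" d] assms by (intro mult_left_mono) auto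
  also have "\<dots> = (2 * real d) ^ d * (exp (- real n) * exp ((real n + 1) / 2))"
    by (rule mult.left_commute)
  also have "\<dots> = (2 * real d) ^ d * exp (1/2) * exp (- 1/2) ^ n"
    by (simp only: e mult.assoc)
  finally show ?thesis .
qed

lemma exp_neg_norm_le_suminf_balls:
  fixes x :: "'a::real_normed_vector"
  shows "ennreal (exp (- norm x)) \<le> (\<Sum>n. ennreal (exp (- real n)) * indicator (ball 0 (real n + 1)) x)"
proof -
  define n where "n = nat \<lfloor>norm x\<rfloor>"
  have "ennreal (exp (- norm x)) \<le> ennreal (exp (- real n)) * indicator (ball 0 (real n + 1)) x"
    unfolding n_def by (simp add: indicator_def of_nat_nat)
  also have "\<dots> \<le> (\<Sum>n. ennreal (exp (- real n)) * indicator (ball 0 (real n + 1)) x)"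
    using sum_le_suminf[OF summableI, of "{n}"] by (simp del: sum_le_suminf)
  finally show ?thesis .
qed

text \<open>Cover \<open>\<real>\<^sup>d\<close> by the balls of radius \<open>n + 1\<close>, on the \<open>n\<close>-th of which we
  keep the weight \<open>e\<^sup>-\<^sup>n\<close>: the volumes grow only polynomially.\<close>
lemma nn_integral_exp_neg_norm_finite:
  "(\<integral>\<^sup>+x. ennreal (exp (- norm (x::'a::euclidean_space))) \<partial>lborel) < \<infinity>"
proof -
  define d where "d = DIM('a)"
  define V where "V = unit_ball_vol (real d)"
  have "0 < d" by (simp add: d_def)
  have "0 \<le> V" by (simp add: V_def)
  have "(\<integral>\<^sup>+x. ennreal (exp (- norm (x::'a))) \<partial>lborel)
     \<le> (\<integral>\<^sup>+x. (\<Sum>n. ennreal (exp (- real n)) * indicator (ball (0::'a) (real n + 1)) x) \<partial>lborel)"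
    by (intro nn_integral_mono exp_neg_norm_le_suminf_balls)
  also have "\<dots> = (\<Sum>n. \<integral>\<^sup>+x. ennreal (exp (- real n)) * indicator (ball (0::'a) (real n + 1)) x \<partial>lborel)"
  proof (rule nn_integral_suminf)
    fix n :: nat
    have [measurable]: "ball (0::'a) (real n + 1) \<in> sets borel" by simp
    show "(\<lambda>x. ennreal (exp (- real n)) * indicator (ball (0::'a) (real n + 1)) x) \<in> borel_measurable lborel"
      by measurable
  qed
  also have "\<dots> = (\<Sum>n. ennreal (exp (- real n) * (V * (real n + 1) ^ d)))"
    unfolding V_def d_def by (simp add: nn_integral_cmult_indicator emeasure_ball ennreal_mult)
  also have "\<dots> \<le> (\<Sum>n. ennreal (V * (2 * real d) ^ d * exp (1/2) * exp (- 1/2) ^ n))"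
  proof (intro suminf_le ennreal_leI summableI)
    fix n
    from mult_left_mono[OF exp_neg_mult_power_le_geometric[OF \<open>0 < d\<close>, of n] \<open>0 \<le> V\<close>]
    show "exp (- real n) * (V * (real n + 1) ^ d) \<le> V * (2 * real d) ^ d * exp (1/2) * exp (- 1/2) ^ n"
      by (simp add: ac_simps)
  qed
  also have "\<dots> < \<infinity>"
  proof -
    have "summable (\<lambda>n. V * (2 * real d) ^ d * exp (1/2) * exp (- 1/2) ^ n)"
      by (intro summable_mult summable_geometric) simp
    then have "(\<Sum>n. ennreal (V * (2 * real d) ^ d * exp (1/2) * exp (- 1/2) ^ n)) \<noteq> top"
      by (rule ennreal_suminf_neq_top) (simp add: \<open>0 \<le> V\<close>)
    then show ?thesis by (simp add: top.not_eq_extremum infinity_ennreal_def)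
  qed
  finally show ?thesis .
qed

lemma powr_above_tangent:
  fixes y m r :: real
  assumes "0 \<le> y" and "0 \<le> m" and "1 \<le> r"
  shows "m powr r + r * m powr (r - 1) * (y - m) \<le> y powr r"
proof (cases "y = 0 \<or> m = 0")
  case True
  have "m powr (r - 1) \<le> r * m powr (r - 1)"
    using mult_right_mono[of 1 r "m powr (r - 1)"] assms by simp
  then have "m * m powr (r - 1) \<le> m * (r * m powr (r - 1))"
    using assms by (intro mult_left_mono) auto
  moreover have "m powr r = m * m powr (r - 1)"
    using assms by (cases "m = 0") (simp_all add: powr_diff)
  ultimately show ?thesis
    using True assms by (auto simp: algebra_simps)
next
  case False
  then have "0 < m" using assms by simp
  have "r * m powr (r - 1) * (y - m) \<le> y powr r - m powr r"
  proof (rule convex_on_imp_above_tangent[OF powr_convex[OF \<open>1 \<le> r\<close>]])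
    show "connected {(0::real)<..}" by simp
    show "m \<in> interior {0<..}" using \<open>0 < m\<close> by (simp add: interior_open)
    show "y \<in> {0<..}" using assms False by simp
    show "((\<lambda>x. x powr r) has_field_derivative r * m powr (r - 1)) (at m within {0<..})"
      using has_real_derivative_powr[OF \<open>0 < m\<close>] by (rule has_field_derivative_at_within)
  qed
  then show ?thesis by simp
qed

lemma summable_mult_bounded:
  fixes w z :: "nat \<Rightarrow> real"
  assumes "summable w" and "\<And>j. 0 \<le> w j" and "\<And>j. 0 \<le> z j" and "\<And>j. z j \<le> B"
  shows "summable (\<lambda>j. w j * z j)"
proof (rule summable_comparison_test'[OF summable_mult[OF assms(1), of B]])
  fix n
  show "norm (w n * z n) \<le> B * w n"
    using mult_left_mono[OF assms(4)[of n] assms(2)[of n]] assms(2,3)[of n] by (simp add: mult.commute)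
qed

text \<open>Jensen's inequality, obtained by summing the tangent inequality at the barycentre.\<close>
lemma powr_suminf_le_weighted:
  fixes w y :: "nat \<Rightarrow> real"
  assumes w: "\<And>j. 0 < w j" "summable w"
    and y: "\<And>j. 0 \<le> y j" "\<And>j. y j \<le> Y" and "1 \<le> r"
  shows "(\<Sum>j. w j * y j) powr r \<le> (\<Sum>j. w j) powr (r - 1) * (\<Sum>j. w j * y j powr r)"
proof -
  have wy: "summable (\<lambda>j. w j * y j)"
    using summable_mult_bounded[OF w(2) less_imp_le[OF w(1)] y] .
  have wyr: "summable (\<lambda>j. w j * y j powr r)"
    using y \<open>1 \<le> r\<close> by (intro summable_mult_bounded[OF w(2) less_imp_le[OF w(1)], of _ "Y powr r"] powr_mono2) auto
  define W where "W = (\<Sum>j. w j)"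
  define P where "P = (\<Sum>j. w j * y j)"
  define m where "m = P / W"
  have "0 < W" unfolding W_def using w suminf_pos by blast
  have "0 \<le> P" unfolding P_def using wy
    by (rule suminf_nonneg) (intro mult_nonneg_nonneg less_imp_le[OF w(1)] y)
  then have "0 \<le> m" unfolding m_def using \<open>0 < W\<close> by simp
  have tangent_sums: "(\<lambda>j. w j * (m powr r + r * m powr (r - 1) * (y j - m))) sums (m powr r * W)"
  proof -
    have "(\<lambda>j. (m powr r - r * m powr (r - 1) * m) * w j + (r * m powr (r - 1)) * (w j * y j))
        sums ((m powr r - r * m powr (r - 1) * m) * W + (r * m powr (r - 1)) * P)"
      unfolding W_def P_def using w(2) wy by (intro sums_add sums_mult summable_sums)
    also have "(m powr r - r * m powr (r - 1) * m) * W + (r * m powr (r - 1)) * P = m powr r * W"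
      unfolding m_def using \<open>0 < W\<close> by (simp add: algebra_simps)
    finally show ?thesis by (simp add: algebra_simps)
  qed
  have "m powr r * W \<le> (\<Sum>j. w j * y j powr r)"
    using powr_above_tangent[OF y(1) \<open>0 \<le> m\<close> \<open>1 \<le> r\<close>] w(1)
    by (intro sums_le[OF _ tangent_sums summable_sums[OF wyr]] mult_left_mono) (auto intro: less_imp_le)
  moreover have "P powr r = W powr (r - 1) * (m powr r * W)"
  proof -
    have "P powr r = m powr r * W powr r"
      unfolding m_def using \<open>0 \<le> P\<close> \<open>0 < W\<close> by (simp add: powr_divide)
    also have "W powr r = W powr (r - 1) * W" using \<open>0 < W\<close> by (simp add: powr_diff)
    finally show ?thesis by (simp add: ac_simps)
  qed
  ultimately show ?thesis
    unfolding P_def[symmetric] W_def[symmetric] using \<open>0 < W\<close> by (simp add: mult_left_mono)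
qed

lemma ennreal_powr_suminf_exp_le:
  fixes w c \<mu> \<rho> :: "nat \<Rightarrow> real"
  assumes w: "\<And>j. 0 < w j" "summable w" and c: "\<And>j. 0 \<le> c j"
    and "\<And>j. 0 \<le> \<mu> j * \<rho> j" and "1 \<le> r" and bounded: "\<And>j. c j / w j \<le> Y"
  shows "ennreal ((\<Sum>j. c j * exp (- \<mu> j * \<rho> j)) powr r)
    \<le> (\<Sum>j. ennreal ((\<Sum>j. w j) powr (r - 1) * w j * (c j / w j) powr r * exp (- (r * \<mu> j) * \<rho> j)))"
proof -
  define W where "W = (\<Sum>j. w j)"
  define e where "e j = exp (- \<mu> j * \<rho> j)" for j
  define y where "y j = c j / w j * e j" for j
  have "0 < W" unfolding W_def using w suminf_pos by blast
  have "0 < e j" "e j \<le> 1" for j unfolding e_def using assms(4)[of j] by auto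
  have y: "0 \<le> y j" "y j \<le> Y" for j
  proof -
    have "0 \<le> c j / w j" using c[of j] w(1)[of j] by simp
    then show "0 \<le> y j"
      unfolding y_def using \<open>0 < e j\<close> by (intro mult_nonneg_nonneg) auto
    show "y j \<le> Y"
      unfolding y_def using mult_right_le_one_le[OF \<open>0 \<le> c j / w j\<close> _ \<open>e j \<le> 1\<close>] \<open>0 < e j\<close> bounded[of j]
      by (meson less_imp_le order_trans)
  qed
  have wyr: "W powr (r - 1) * (w j * y j powr r)
      = W powr (r - 1) * w j * (c j / w j) powr r * exp (- (r * \<mu> j) * \<rho> j)" for j
  proof -
    have "y j powr r = (c j / w j) powr r * e j powr r"
      unfolding y_def using c[of j] w(1)[of j] \<open>0 < e j\<close> by (intro powr_mult)
    also have "e j powr r = exp (- (r * \<mu> j) * \<rho> j)"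
      unfolding e_def by (simp add: powr_def)
    finally show ?thesis by simp
  qed
  have "summable (\<lambda>j. w j * y j powr r)"
    using y \<open>1 \<le> r\<close> by (intro summable_mult_bounded[OF w(2) less_imp_le[OF w(1)], of _ "Y powr r"] powr_mono2) auto
  then have sum_eq: "ennreal (W powr (r - 1) * (\<Sum>j. w j * y j powr r))
      = (\<Sum>j. ennreal (W powr (r - 1) * w j * (c j / w j) powr r * exp (- (r * \<mu> j) * \<rho> j)))"
    unfolding wyr[symmetric] using w(1)
    by (intro suminf_ennreal_eq[symmetric] sums_mult summable_sums) (metis less_imp_le mult_nonneg_nonneg powr_ge_zero)
  have "w j * y j = c j * exp (- \<mu> j * \<rho> j)" for j
    unfolding y_def e_def using w(1)[of j] by simp
  then have "(\<Sum>j. c j * exp (- \<mu> j * \<rho> j)) powr r \<le> W powr (r - 1) * (\<Sum>j. w j * y j powr r)"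
    using powr_suminf_le_weighted[where y = y, OF w y \<open>1 \<le> r\<close>] unfolding W_def by simp
  then show ?thesis
    unfolding W_def[symmetric] sum_eq[symmetric] by (rule ennreal_leI)
qed

text \<open>After Jensen's inequality with weights \<open>w\<^sub>j\<close>, the normalisation of
  \<open>c\<^sub>j / w\<^sub>j\<close> makes the integral of the \<open>j\<close>-th term proportional to \<open>w\<^sub>j\<close>.\<close>
lemma nn_integral_powr_exp_series_le:
  fixes p :: "nat \<Rightarrow> 'a::euclidean_space" and w c \<mu> :: "nat \<Rightarrow> real"
  assumes w: "\<And>j. 0 < w j" "summable w"
    and c: "\<And>j. 0 \<le> c j" and \<mu>: "\<And>j. 0 < \<mu> j"
    and "1 \<le> r" and "0 \<le> \<kappa>"
    and normalised: "\<And>j. (c j / w j) powr r = \<mu> j ^ DIM('a) * \<kappa>"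
    and bounded: "\<And>j. c j / w j \<le> Y"
  shows "(\<integral>\<^sup>+x. ennreal ((\<Sum>j. c j * exp (- \<mu> j * norm (x - p j))) powr r) \<partial>lborel)
      \<le> ennreal ((\<Sum>j. w j) powr r * \<kappa> / r ^ DIM('a)) * (\<integral>\<^sup>+x. ennreal (exp (- norm (x::'a))) \<partial>lborel)"
proof -
  define d where "d = DIM('a)"
  define W where "W = (\<Sum>j. w j)"
  define I where "I = (\<integral>\<^sup>+x. ennreal (exp (- norm (x::'a))) \<partial>lborel)"
  define A where "A j = W powr (r - 1) * w j * \<mu> j ^ d * \<kappa>" for j
  have "0 < W" unfolding W_def using w suminf_pos by blast
  have "0 \<le> A j" for j unfolding A_def using w(1)[of j] \<mu>[of j] \<open>0 \<le> \<kappa>\<close> by simp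
  have pointwise: "ennreal ((\<Sum>j. c j * exp (- \<mu> j * norm (x - p j))) powr r)
      \<le> (\<Sum>j. ennreal (A j * exp (- (r * \<mu> j) * norm (x - p j))))" for x
    using ennreal_powr_suminf_exp_le[OF w c _ \<open>1 \<le> r\<close> bounded, of \<mu> "\<lambda>j. norm (x - p j)"] \<mu>
    unfolding A_def W_def d_def normalised by (simp add: less_imp_le ac_simps)
  have term_integral: "(\<integral>\<^sup>+x. ennreal (A j * exp (- (r * \<mu> j) * norm (x - p j))) \<partial>lborel)
      = ennreal (W powr (r - 1) * \<kappa> / r ^ d) * ennreal (w j) * I" for j
  proof -
    have "0 < r * \<mu> j" using \<open>1 \<le> r\<close> \<mu>[of j] by simp
    moreover have "A j / (r * \<mu> j) ^ d = W powr (r - 1) * \<kappa> / r ^ d * w j"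
      unfolding A_def using \<mu>[of j] \<open>1 \<le> r\<close> by (simp add: power_mult_distrib field_simps)
    ultimately show ?thesis
      unfolding I_def d_def using nn_integral_exp_norm_scaled[of "r * \<mu> j" "A j" "p j"] \<open>0 \<le> A j\<close> \<open>0 \<le> \<kappa>\<close> \<open>1 \<le> r\<close> w(1)[of j]
      by (simp add: ennreal_mult'[symmetric])
  qed
  have "(\<integral>\<^sup>+x. ennreal ((\<Sum>j. c j * exp (- \<mu> j * norm (x - p j))) powr r) \<partial>lborel)
      \<le> (\<integral>\<^sup>+x. (\<Sum>j. ennreal (A j * exp (- (r * \<mu> j) * norm (x - p j)))) \<partial>lborel)"
    by (intro nn_integral_mono pointwise)
  also have "\<dots> = (\<Sum>j. \<integral>\<^sup>+x. ennreal (A j * exp (- (r * \<mu> j) * norm (x - p j))) \<partial>lborel)"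
    by (rule nn_integral_suminf) measurable
  also have "\<dots> = ennreal (W powr (r - 1) * \<kappa> / r ^ d) * (\<Sum>j. ennreal (w j)) * I"
    unfolding term_integral by (simp add: mult.assoc)
  also have "(\<Sum>j. ennreal (w j)) = ennreal W"
    unfolding W_def using w by (intro suminf_ennreal_eq) (auto simp: summable_sums less_imp_le)
  also have "ennreal (W powr (r - 1) * \<kappa> / r ^ d) * ennreal W = ennreal (W powr r * \<kappa> / r ^ d)"
    using \<open>0 < W\<close> \<open>0 \<le> \<kappa>\<close> \<open>1 \<le> r\<close> by (simp add: ennreal_mult[symmetric] powr_diff field_simps)
  finally show ?thesis unfolding W_def I_def d_def .
qed

lemma nn_integral_powr_le_interpolation:
  fixes h F :: "'b \<Rightarrow> real"
  assumes "F \<in> borel_measurable M"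
    and h: "\<And>x. 0 \<le> h x" "\<And>x. h x \<le> A" "\<And>x. h x \<le> K * F x powr \<beta>"
    and "0 \<le> K" and "0 < q" and "q \<le> p"
    and F_integral: "(\<integral>\<^sup>+x. ennreal (F x powr (\<beta> * q)) \<partial>M) \<le> ennreal B"
  shows "(\<integral>\<^sup>+x. ennreal (h x powr p) \<partial>M) \<le> ennreal (A powr (p - q) * K powr q * B)"
proof -
  have "h x powr p \<le> A powr (p - q) * K powr q * F x powr (\<beta> * q)" for x
  proof -
    have "h x powr p = h x powr (p - q) * h x powr q"
      by (simp add: powr_add[symmetric])
    also have "\<dots> \<le> A powr (p - q) * (K * F x powr \<beta>) powr q"
      using h[of x] \<open>0 < q\<close> \<open>q \<le> p\<close> by (intro mult_mono powr_mono2) auto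
    also have "(K * F x powr \<beta>) powr q = K powr q * F x powr (\<beta> * q)"
      using \<open>0 \<le> K\<close> by (simp add: powr_mult powr_powr)
    finally show ?thesis by (simp add: ac_simps)
  qed
  then have "(\<integral>\<^sup>+x. ennreal (h x powr p) \<partial>M)
      \<le> (\<integral>\<^sup>+x. ennreal (A powr (p - q) * K powr q) * ennreal (F x powr (\<beta> * q)) \<partial>M)"
    by (intro nn_integral_mono) (simp add: ennreal_mult'[symmetric] ennreal_leI)
  also have "\<dots> = ennreal (A powr (p - q) * K powr q) * (\<integral>\<^sup>+x. ennreal (F x powr (\<beta> * q)) \<partial>M)"
    using assms(1) by (intro nn_integral_cmult) measurable
  also have "\<dots> \<le> ennreal (A powr (p - q) * K powr q) * ennreal B"
    using F_integral by (rule mult_left_mono) simp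
  also have "\<dots> = ennreal (A powr (p - q) * K powr q * B)"
    by (rule ennreal_mult'[symmetric]) simp
  finally show ?thesis .
qed

lemma exists_decay_constants:
  fixes a p q L \<Lambda> :: real
  assumes "0 < a" and "0 < q" and "q < p" and "0 \<le> L" and "0 \<le> \<Lambda>"
  obtains c1 C where "0 < c1" and "c1 < a / 2" and "0 < C"
    and "\<And>s. 0 \<le> s \<Longrightarrow> L * exp (- a / 2 * s) \<le> C * exp (- c1 * s)"
    and "\<And>s. 0 \<le> s \<Longrightarrow> (L * exp (- a / 2 * s)) powr (p - q) * \<Lambda> \<le> (C * exp (- c1 * s)) powr p"
proof
  define c1 where "c1 = a * (p - q) / (2 * p)"
  define C where "C = max (L + 1) ((L powr (p - q) * \<Lambda> + 1) powr (1 / p))"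
  have "0 < p" using assms by simp
  show "0 < c1" unfolding c1_def using assms by simp
  show "c1 < a / 2" unfolding c1_def using assms by (simp add: field_simps)
  show "0 < C" unfolding C_def using assms by (simp add: less_max_iff_disj)
  fix s :: real assume "0 \<le> s"
  have "c1 * s \<le> a / 2 * s"
    using \<open>c1 < a / 2\<close> \<open>0 \<le> s\<close> by (intro mult_right_mono) auto
  then have "exp (- a / 2 * s) \<le> exp (- c1 * s)"
    by simp
  then show "L * exp (- a / 2 * s) \<le> C * exp (- c1 * s)"
    unfolding C_def using \<open>0 \<le> L\<close> by (intro mult_mono) auto
  have "L powr (p - q) * \<Lambda> \<le> ((L powr (p - q) * \<Lambda> + 1) powr (1 / p)) powr p"
    using \<open>0 < p\<close> \<open>0 \<le> \<Lambda>\<close> by (simp add: powr_powr)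
  also have "\<dots> \<le> C powr p"
    unfolding C_def using \<open>0 < p\<close> by (intro powr_mono2) auto
  finally have "L powr (p - q) * \<Lambda> * exp (- c1 * s) powr p \<le> C powr p * exp (- c1 * s) powr p"
    by (rule mult_right_mono) simp
  moreover have "exp (- a / 2 * s) powr (p - q) = exp (- c1 * s) powr p"
    unfolding c1_def using \<open>0 < p\<close> by (simp add: powr_def field_simps)
  ultimately show "(L * exp (- a / 2 * s)) powr (p - q) * \<Lambda> \<le> (C * exp (- c1 * s)) powr p"
    using \<open>0 \<le> L\<close> \<open>0 < C\<close> by (simp add: powr_mult ac_simps)
qed

section \<open>Soliton trains\<close>

lemma vstar_nonneg:
  assumes "\<And>j. 0 \<le> \<omega> j"
  shows "0 \<le> vstar \<omega> v"
  unfolding vstar_def using assms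
  by (intro cINF_greatest) (auto intro!: exI[of _ "(0, 1)"])

lemma vstar_le:
  assumes "\<And>j. 0 \<le> \<omega> j" and "j \<noteq> k"
  shows "vstar \<omega> v \<le> sqrt (\<omega> j) * norm (v k - v j)"
proof -
  have "bdd_below ((\<lambda>jk. sqrt (\<omega> (fst jk)) * norm (v (snd jk) - v (fst jk))) ` {(j, k). j \<noteq> k})"
    using assms(1) by (intro bdd_belowI[of _ 0]) auto
  from cINF_lower[OF this, of "(j, k)"] show ?thesis
    unfolding vstar_def using assms(2) by simp
qed

text \<open>Two solitons travelling with relative speed \<open>\<bar>v\<^sub>k - v\<^sub>j\<bar>\<close> are at distance
  \<open>t \<bar>v\<^sub>k - v\<^sub>j\<bar>\<close> at time \<open>t\<close>, so no point is close to both centres.\<close>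
lemma exp_decay_product_le_vstar:
  fixes v :: "nat \<Rightarrow> 'a::euclidean_space"
  assumes "\<And>j. 0 \<le> \<omega> j" and "j \<noteq> k" and "0 \<le> a" and "0 \<le> t"
  shows "exp (- a * sqrt (\<omega> j) * norm (x - t *\<^sub>R v j)) * exp (- a * sqrt (\<omega> k) * norm (x - t *\<^sub>R v k))
     \<le> exp (- a * vstar \<omega> v * t)"
proof -
  define m where "m = min (sqrt (\<omega> j)) (sqrt (\<omega> k))"
  have "0 \<le> m" unfolding m_def using assms(1) by simp
  have "vstar \<omega> v \<le> m * norm (v j - v k)"
    using vstar_le[OF assms(1,2), where v = v] vstar_le[OF assms(1), where j = k and k = j and v = v] assms(2)
    unfolding m_def by (auto simp: min_def norm_minus_commute)
  have "t * norm (v j - v k) = norm ((x - t *\<^sub>R v k) - (x - t *\<^sub>R v j))"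
    using \<open>0 \<le> t\<close> by (simp add: scaleR_diff_right[symmetric])
  then have distance: "t * norm (v j - v k) \<le> norm (x - t *\<^sub>R v j) + norm (x - t *\<^sub>R v k)"
    by (metis norm_triangle_ineq4 add.commute)
  have "vstar \<omega> v * t \<le> m * (t * norm (v j - v k))"
    using mult_right_mono[OF \<open>vstar \<omega> v \<le> m * norm (v j - v k)\<close> \<open>0 \<le> t\<close>] by (simp add: ac_simps)
  also have "\<dots> \<le> m * (norm (x - t *\<^sub>R v j) + norm (x - t *\<^sub>R v k))"
    using distance \<open>0 \<le> m\<close> by (rule mult_left_mono)
  also have "\<dots> \<le> sqrt (\<omega> j) * norm (x - t *\<^sub>R v j) + sqrt (\<omega> k) * norm (x - t *\<^sub>R v k)"
    unfolding m_def by (simp add: distrib_left add_mono mult_right_mono)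
  finally have "a * (vstar \<omega> v * t)
      \<le> a * (sqrt (\<omega> j) * norm (x - t *\<^sub>R v j) + sqrt (\<omega> k) * norm (x - t *\<^sub>R v k))"
    using \<open>0 \<le> a\<close> by (rule mult_left_mono)
  then show ?thesis
    by (simp add: exp_add[symmetric] algebra_simps)
qed

lemma bounded_powr_of_summable_powr:
  fixes \<omega> :: "nat \<Rightarrow> real"
  assumes "summable (\<lambda>j. \<omega> j powr e)" and "0 < e" and "0 \<le> \<beta>" and "\<And>j. 0 \<le> \<omega> j"
  obtains Y where "\<And>j. \<omega> j powr \<beta> \<le> Y"
proof
  fix j
  have "\<omega> j powr e \<le> (\<Sum>j. \<omega> j powr e)"
    using sum_le_suminf[OF assms(1), of "{j}"] by simp
  then have "(\<omega> j powr e) powr (\<beta> / e) \<le> (\<Sum>j. \<omega> j powr e) powr (\<beta> / e)"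
    using assms by (intro powr_mono2) auto
  then show "\<omega> j powr \<beta> \<le> (\<Sum>j. \<omega> j powr e) powr (\<beta> / e)"
    using assms by (simp add: powr_powr)
qed

text \<open>Up to the constant \<open>D\<close> of (T1), the envelope dominates \<open>\<Sum>\<^sub>j \<bar>R\<^sub>j(t, x)\<bar>\<close>.\<close>
definition envelope :: "(nat \<Rightarrow> real) \<Rightarrow> real \<Rightarrow> real \<Rightarrow> (nat \<Rightarrow> 'a::euclidean_space) \<Rightarrow> real \<Rightarrow> 'a \<Rightarrow> real"
  where "envelope \<omega> \<alpha> a v t x = (\<Sum>j. \<omega> j powr (1/\<alpha>) * exp (- a * sqrt (\<omega> j) * norm (x - t *\<^sub>R v j)))"

lemma summable_powr_add_nonneg:
  fixes \<omega> :: "nat \<Rightarrow> real"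
  assumes "summable (\<lambda>j. \<omega> j powr e)" and "0 < e" and "0 \<le> \<beta>" and "\<And>j. 0 \<le> \<omega> j"
  shows "summable (\<lambda>j. \<omega> j powr (e + \<beta>))"
proof -
  obtain Y where Y: "\<And>j. \<omega> j powr \<beta> \<le> Y"
    using bounded_powr_of_summable_powr[OF assms] by blast
  have "norm (\<omega> j powr (e + \<beta>)) \<le> Y * \<omega> j powr e" for j
    using mult_left_mono[OF Y[of j], of "\<omega> j powr e"] by (simp add: powr_add mult.commute)
  then show ?thesis by (rule summable_comparison_test'[OF summable_mult[OF assms(1)]])
qed

lemma borel_measurable_envelope: "envelope \<omega> \<alpha> a v t \<in> borel_measurable borel"
  unfolding envelope_def[abs_def] by measurable

text \<open>The weights \<open>w\<^sub>j = \<omega>\<^sub>j\<^sup>e\<close> of (T1) are chosen such that, after the rescaling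
  \<open>x \<mapsto> \<surd>\<omega>\<^sub>j x\<close>, all solitons contribute comparably to the \<open>L\<^sup>r\<close> norm.\<close>
lemma T1_weights:
  fixes \<omega> :: "nat \<Rightarrow> real" and d :: nat
  assumes "0 < \<alpha>" and "0 < a" and "1 \<le> r" and "real d * \<alpha> / 2 < r"
    and summable: "summable (\<lambda>j. \<omega> j powr (1/\<alpha> - real d / (2 * r)))"
    and \<omega>: "\<And>j. 0 < \<omega> j"
  obtains w Y where "\<And>j. 0 < w j" and "summable w" and "\<And>j. \<omega> j powr (1/\<alpha>) / w j \<le> Y"
    and "\<And>j. (\<omega> j powr (1/\<alpha>) / w j) powr r = (a * sqrt (\<omega> j)) ^ d * (1 / a ^ d)"
proof -
  define e where "e = 1/\<alpha> - real d / (2 * r)"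
  define w where "w j = \<omega> j powr e" for j
  have "0 < e" unfolding e_def using assms(1-4) by (simp add: field_simps)
  have "0 \<le> real d / (2 * r)" using \<open>1 \<le> r\<close> by simp
  obtain Y where Y: "\<And>j. \<omega> j powr (real d / (2 * r)) \<le> Y"
    using bounded_powr_of_summable_powr[OF summable[folded e_def] \<open>0 < e\<close> \<open>0 \<le> real d / (2 * r)\<close>] \<omega>
    by (meson less_imp_le)
  have ratio: "\<omega> j powr (1/\<alpha>) / w j = \<omega> j powr (real d / (2 * r))" for j
    unfolding w_def e_def using \<omega>[of j] by (simp add: powr_diff)
  have normalised: "(\<omega> j powr (1/\<alpha>) / w j) powr r = (a * sqrt (\<omega> j)) ^ d * (1 / a ^ d)" for j
  proof -
    have "(\<omega> j powr (real d / (2 * r))) powr r = (\<omega> j powr (1/2)) ^ d"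
      using \<omega>[of j] \<open>1 \<le> r\<close> by (simp add: powr_powr powr_power)
    then show ?thesis
      unfolding ratio using \<omega>[of j] \<open>0 < a\<close> by (simp add: powr_half_sqrt power_mult_distrib)
  qed
  have "0 < w j" for j unfolding w_def using \<omega>[of j] by simp
  moreover have "summable w" using summable unfolding w_def e_def .
  moreover have "\<omega> j powr (1/\<alpha>) / w j \<le> Y" for j unfolding ratio by (rule Y)
  ultimately show thesis using normalised by (rule that)
qed

lemma nn_integral_envelope_powr_bounded:
  fixes \<omega> :: "nat \<Rightarrow> real"
  assumes "0 < \<alpha>" and "0 < a" and "1 \<le> r" and "real DIM('a) * \<alpha> / 2 < r"
    and "summable (\<lambda>j. \<omega> j powr (1/\<alpha> - real DIM('a) / (2 * r)))" and "\<And>j. 0 < \<omega> j"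
  obtains B where "0 \<le> B" and "\<And>(v :: nat \<Rightarrow> 'a::euclidean_space) t.
    (\<integral>\<^sup>+x. ennreal (envelope \<omega> \<alpha> a v t x powr r) \<partial>lebesgue) \<le> ennreal B"
proof -
  obtain w Y where "\<And>j. 0 < w j" "summable w" "\<And>j. \<omega> j powr (1/\<alpha>) / w j \<le> Y"
    and normalised: "\<And>j. (\<omega> j powr (1/\<alpha>) / w j) powr r = (a * sqrt (\<omega> j)) ^ DIM('a) * (1 / a ^ DIM('a))"
    using T1_weights[OF assms] by blast
  define I where "I = (\<integral>\<^sup>+x. ennreal (exp (- norm (x::'a))) \<partial>lborel)"
  define B where "B = (\<Sum>j. w j) powr r * (1 / a ^ DIM('a)) / r ^ DIM('a) * enn2real I"
  have "I < \<infinity>" unfolding I_def by (rule nn_integral_exp_neg_norm_finite)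
  have "0 \<le> B" unfolding B_def using \<open>0 < a\<close> \<open>1 \<le> r\<close> by simp
  have "(\<integral>\<^sup>+x. ennreal (envelope \<omega> \<alpha> a v t x powr r) \<partial>lebesgue) \<le> ennreal B" for v :: "nat \<Rightarrow> 'a" and t
  proof -
    have "(\<integral>\<^sup>+x. ennreal (envelope \<omega> \<alpha> a v t x powr r) \<partial>lebesgue)
        = (\<integral>\<^sup>+x. ennreal ((\<Sum>j. \<omega> j powr (1/\<alpha>) * exp (- (a * sqrt (\<omega> j)) * norm (x - t *\<^sub>R v j))) powr r) \<partial>lborel)"
      using borel_measurable_envelope[of \<omega> \<alpha> a v t]
      by (subst nn_integral_completion) (measurable, simp add: envelope_def)
    also have "\<dots> \<le> ennreal ((\<Sum>j. w j) powr r * (1 / a ^ DIM('a)) / r ^ DIM('a)) * I"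
      unfolding I_def
      using \<open>\<And>j. 0 < w j\<close> \<open>summable w\<close> \<open>1 \<le> r\<close> \<open>0 < a\<close> \<open>\<And>j. \<omega> j powr (1/\<alpha>) / w j \<le> Y\<close> assms(6)
      by (intro nn_integral_powr_exp_series_le[OF _ _ _ _ _ _ normalised]) auto
    also have "I = ennreal (enn2real I)"
      using \<open>I < \<infinity>\<close> by simp
    also have "ennreal ((\<Sum>j. w j) powr r * (1 / a ^ DIM('a)) / r ^ DIM('a)) * ennreal (enn2real I) = ennreal B"
      unfolding B_def using \<open>0 < a\<close> \<open>1 \<le> r\<close> by (intro ennreal_mult'[symmetric]) simp
    finally show ?thesis .
  qed
  with \<open>0 \<le> B\<close> show thesis by (rule that)
qed

section \<open>Estimates for the source term\<close>

lemma norm_soliton: "cmod (soliton \<phi> \<omega> v \<gamma> t x) = cmod (\<phi> (x - t *\<^sub>R v))"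
  unfolding soliton_def by (simp add: norm_mult)

lemma source_eq_interaction:
  "source g \<phi> \<omega> v \<gamma> t x = interaction g (\<lambda>j. soliton (\<phi> j) (\<omega> j) (v j) (\<gamma> j) t x)"
  unfolding source_def interaction_def ..

lemma source_measurable:
  assumes "continuous_on {0..} g" and "\<And>j. continuous_on UNIV (\<phi> j)"
  shows "source g \<phi> \<omega> v \<gamma> t \<in> borel_measurable lebesgue"
proof -
  have "continuous_on UNIV (\<lambda>x. soliton (\<phi> j) (\<omega> j) (v j) (\<gamma> j) t x)" for j
    unfolding soliton_def
    by (intro continuous_intros continuous_on_compose2[OF assms(2)[of j]]) auto
  then have [measurable]: "(\<lambda>x. soliton (\<phi> j) (\<omega> j) (v j) (\<gamma> j) t x) \<in> borel_measurable borel" for j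
    by (rule borel_measurable_continuous_onI)
  have [measurable]: "fnl g \<in> borel_measurable borel"
    by (rule borel_measurable_continuous_onI[OF continuous_on_fnl[OF assms(1)]])
  have "source g \<phi> \<omega> v \<gamma> t \<in> borel_measurable borel"
    unfolding source_def[abs_def] by measurable
  then show ?thesis by (intro measurable_completion) simp
qed

context
  fixes g :: "real \<Rightarrow> real" and \<phi> :: "nat \<Rightarrow> 'a::euclidean_space \<Rightarrow> complex" and \<omega> :: "nat \<Rightarrow> real"
    and d :: nat and \<alpha>1 \<alpha>2 a D :: real
  assumes F: "F0 d g \<alpha>1 \<alpha>2" and \<omega>: "\<And>j. 0 < \<omega> j" and "0 < a" and "0 \<le> D"
    and profile_bound: "\<And>j y. cmod (\<phi> j y) \<le> D * \<omega> j powr (1/\<alpha>1) * exp (- a * sqrt (\<omega> j) * norm y)"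
    and summable_amplitudes: "summable (\<lambda>j. \<omega> j powr (1/\<alpha>1))"
begin

lemma norm_soliton_le:
  "cmod (soliton (\<phi> j) (\<omega> j) (v j) (\<gamma> j) t x)
     \<le> D * \<omega> j powr (1/\<alpha>1) * exp (- a * sqrt (\<omega> j) * norm (x - t *\<^sub>R v j))"
  unfolding norm_soliton by (rule profile_bound)

lemma source_le_exp_vstar:
  obtains L where "0 \<le> L"
    and "\<And>v \<gamma> t x. 0 \<le> t \<Longrightarrow> cmod (source g \<phi> \<omega> v \<gamma> t x) \<le> L * exp (- a / 2 * (vstar \<omega> v * t))"
proof -
  define c where "c j = D * \<omega> j powr (1/\<alpha>1)" for j
  have "summable c" "0 \<le> c j" for j
    unfolding c_def using summable_amplitudes \<open>0 \<le> D\<close> by (auto intro: summable_mult)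
  then have "0 \<le> suminf c" by (rule suminf_nonneg)
  obtain L where "0 \<le> L" and L: "\<And>z w. cmod z \<le> suminf c \<Longrightarrow> cmod w \<le> suminf c \<Longrightarrow>
      cmod (fnl g z - fnl g w) \<le> L * cmod (z - w)"
    using fnl_lipschitz_on_ball[OF F \<open>0 \<le> suminf c\<close>] by blast
  have "cmod (source g \<phi> \<omega> v \<gamma> t x) \<le> 2 * L * suminf c * exp (- a / 2 * (vstar \<omega> v * t))"
    if "0 \<le> t" for v \<gamma> t x
  proof -
    define b where "b j = exp (- a * sqrt (\<omega> j) * norm (x - t *\<^sub>R v j))" for j
    have "b j \<le> 1" for j unfolding b_def using \<open>0 < a\<close> \<omega>[of j] by simp
    have "b j * b k \<le> exp (- a * vstar \<omega> v * t)" if "j \<noteq> k" for j k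
      unfolding b_def using exp_decay_product_le_vstar[of \<omega> j k a t] \<omega> that \<open>0 < a\<close> \<open>0 \<le> t\<close>
      by (simp add: less_imp_le)
    from norm_interaction_le_sqrt[OF \<open>summable c\<close> \<open>\<And>j. 0 \<le> c j\<close> \<open>\<And>j. b j \<le> 1\<close> this _ _ \<open>0 \<le> L\<close> L]
    have "cmod (source g \<phi> \<omega> v \<gamma> t x) \<le> 2 * L * suminf c * sqrt (exp (- a * vstar \<omega> v * t))"
      unfolding source_eq_interaction using norm_soliton_le unfolding b_def c_def by simp
    also have "sqrt (exp (- a * vstar \<omega> v * t)) = exp (- a / 2 * (vstar \<omega> v * t))"
      by (rule real_sqrt_unique) (simp_all add: power2_eq_square exp_add[symmetric])
    finally show ?thesis .
  qed
  then show thesis using that[of "2 * L * suminf c"] \<open>0 \<le> L\<close> \<open>0 \<le> suminf c\<close> by simp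
qed

lemma source_le_envelope:
  obtains K where "0 \<le> K"
    and "\<And>v \<gamma> t x. cmod (source g \<phi> \<omega> v \<gamma> t x) \<le> K * envelope \<omega> \<alpha>1 a v t x powr (1 + \<alpha>1)"
proof -
  have "0 < \<alpha>1" using F unfolding F0_def by simp
  define M where "M = D * (\<Sum>j. \<omega> j powr (1/\<alpha>1))"
  have "0 \<le> M" unfolding M_def using \<open>0 \<le> D\<close> \<omega> by (simp add: less_imp_le suminf_nonneg[OF summable_amplitudes])
  obtain K where "0 \<le> K" and K: "\<And>z. cmod z \<le> M \<Longrightarrow> cmod (fnl g z) \<le> K * cmod z powr (1 + \<alpha>1)"
    using fnl_norm_le_on_ball[OF F \<open>0 \<le> M\<close>] by blast
  have "cmod (source g \<phi> \<omega> v \<gamma> t x) \<le> 2 * K * D powr (1 + \<alpha>1) * envelope \<omega> \<alpha>1 a v t x powr (1 + \<alpha>1)"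
    for v \<gamma> t x
  proof -
    define e where "e j = \<omega> j powr (1/\<alpha>1) * exp (- a * sqrt (\<omega> j) * norm (x - t *\<^sub>R v j))" for j
    have "summable e" "0 \<le> e j" for j
      unfolding e_def using \<open>0 < a\<close> \<omega>
      by (auto intro!: summable_comparison_test'[OF summable_amplitudes] simp: mult_left_le less_imp_le)
    have "envelope \<omega> \<alpha>1 a v t x = suminf e" unfolding envelope_def e_def ..
    have "suminf (\<lambda>j. D * e j) \<le> M"
      unfolding M_def suminf_mult[OF \<open>summable e\<close>] using \<open>0 \<le> D\<close> \<open>summable e\<close> summable_amplitudes
      by (intro mult_left_mono suminf_le) (auto simp: e_def \<omega> less_imp_le \<open>0 < a\<close> mult_left_le)
    with norm_interaction_le_powr[OF summable_mult[OF \<open>summable e\<close>] _ _ \<open>0 < \<alpha>1\<close> \<open>0 \<le> K\<close> _ K]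
    have "cmod (source g \<phi> \<omega> v \<gamma> t x) \<le> 2 * K * (D * suminf e) powr (1 + \<alpha>1)"
      unfolding source_eq_interaction suminf_mult[OF \<open>summable e\<close>]
      using norm_soliton_le \<open>\<And>j. 0 \<le> e j\<close> \<open>0 \<le> D\<close> unfolding e_def by (simp add: ac_simps)
    also have "\<dots> = 2 * K * D powr (1 + \<alpha>1) * envelope \<omega> \<alpha>1 a v t x powr (1 + \<alpha>1)"
      unfolding \<open>envelope \<omega> \<alpha>1 a v t x = suminf e\<close>
      using \<open>0 \<le> D\<close> suminf_nonneg[OF \<open>summable e\<close> \<open>\<And>j. 0 \<le> e j\<close>] by (simp add: powr_mult)
    finally show ?thesis .
  qed
  then show thesis using that[of "2 * K * D powr (1 + \<alpha>1)"] \<open>0 \<le> K\<close> by simp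
qed

text \<open>Interpolating between the two pointwise bounds trades part of the time decay for
  the integrability of the envelope.\<close>
lemma source_decay_estimates:
  fixes p q r :: real
  assumes "1 \<le> r" and "real DIM('a) * \<alpha>1 / 2 < r"
    and "summable (\<lambda>j. \<omega> j powr (1/\<alpha>1 - real DIM('a) / (2 * r)))"
    and "0 < q" and "q \<le> p" and "(1 + \<alpha>1) * q = r"
  obtains L \<Lambda> where "0 \<le> L" and "0 \<le> \<Lambda>"
    and "\<And>v \<gamma> t x. 0 \<le> t \<Longrightarrow> cmod (source g \<phi> \<omega> v \<gamma> t x) \<le> L * exp (- a / 2 * (vstar \<omega> v * t))"
    and "\<And>v \<gamma> t. 0 \<le> t \<Longrightarrow> (\<integral>\<^sup>+x. ennreal (cmod (source g \<phi> \<omega> v \<gamma> t x) powr p) \<partial>lebesgue)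
      \<le> ennreal ((L * exp (- a / 2 * (vstar \<omega> v * t))) powr (p - q) * \<Lambda>)"
proof -
  have "0 < \<alpha>1" using F unfolding F0_def by simp
  obtain L where "0 \<le> L"
    and sup: "\<And>v \<gamma> t x. 0 \<le> t \<Longrightarrow> cmod (source g \<phi> \<omega> v \<gamma> t x) \<le> L * exp (- a / 2 * (vstar \<omega> v * t))"
    using source_le_exp_vstar by blast
  obtain K where "0 \<le> K"
    and growth: "\<And>v \<gamma> t x. cmod (source g \<phi> \<omega> v \<gamma> t x) \<le> K * envelope \<omega> \<alpha>1 a v t x powr (1 + \<alpha>1)"
    using source_le_envelope by blast
  obtain B where "0 \<le> B" and envelope_integral: "\<And>(v :: nat \<Rightarrow> 'a) t.
      (\<integral>\<^sup>+x. ennreal (envelope \<omega> \<alpha>1 a v t x powr r) \<partial>lebesgue) \<le> ennreal B"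
    using nn_integral_envelope_powr_bounded[OF \<open>0 < \<alpha>1\<close> \<open>0 < a\<close> assms(1-3) \<omega>] by blast
  have "(\<integral>\<^sup>+x. ennreal (cmod (source g \<phi> \<omega> v \<gamma> t x) powr p) \<partial>lebesgue)
      \<le> ennreal ((L * exp (- a / 2 * (vstar \<omega> v * t))) powr (p - q) * (K powr q * B))"
    if "0 \<le> t" for v \<gamma> t
  proof (rule nn_integral_powr_le_interpolation[OF _ _ sup[OF that] growth \<open>0 \<le> K\<close> \<open>0 < q\<close> \<open>q \<le> p\<close>,
        THEN order_trans])
    show "envelope \<omega> \<alpha>1 a v t \<in> borel_measurable lebesgue"
      using borel_measurable_envelope by (intro measurable_completion) simp
    show "(\<integral>\<^sup>+x. ennreal (envelope \<omega> \<alpha>1 a v t x powr ((1 + \<alpha>1) * q)) \<partial>lebesgue) \<le> ennreal B"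
      using envelope_integral[of v t] unfolding \<open>(1 + \<alpha>1) * q = r\<close> .
  qed (simp_all add: ac_simps)
  with \<open>0 \<le> L\<close> \<open>0 \<le> K\<close> \<open>0 \<le> B\<close> sup show thesis
    by (intro that[of L "K powr q * B"]) auto
qed

lemma source_exponential_decay:
  fixes p q r :: real
  assumes "1 \<le> r" and "real DIM('a) * \<alpha>1 / 2 < r"
    and "summable (\<lambda>j. \<omega> j powr (1/\<alpha>1 - real DIM('a) / (2 * r)))"
    and "0 < q" and "q < p" and "(1 + \<alpha>1) * q = r"
  obtains c1 C where "0 < c1" and "c1 < a / 2" and "0 < C"
    and "\<And>v \<gamma> t x. 0 \<le> t \<Longrightarrow> cmod (source g \<phi> \<omega> v \<gamma> t x) \<le> C * exp (- c1 * (vstar \<omega> v * t))"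
    and "\<And>v \<gamma> t. 0 \<le> t \<Longrightarrow> (\<integral>\<^sup>+x. ennreal (cmod (source g \<phi> \<omega> v \<gamma> t x) powr p) \<partial>lebesgue)
      \<le> ennreal ((C * exp (- c1 * (vstar \<omega> v * t))) powr p)"
proof -
  obtain L \<Lambda> where "0 \<le> L" "0 \<le> \<Lambda>"
    and sup: "\<And>v \<gamma> t x. 0 \<le> t \<Longrightarrow> cmod (source g \<phi> \<omega> v \<gamma> t x) \<le> L * exp (- a / 2 * (vstar \<omega> v * t))"
    and Lp: "\<And>v \<gamma> t. 0 \<le> t \<Longrightarrow> (\<integral>\<^sup>+x. ennreal (cmod (source g \<phi> \<omega> v \<gamma> t x) powr p) \<partial>lebesgue)
      \<le> ennreal ((L * exp (- a / 2 * (vstar \<omega> v * t))) powr (p - q) * \<Lambda>)"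
    using source_decay_estimates[OF assms(1-4) less_imp_le[OF \<open>q < p\<close>] assms(6)] by blast
  obtain c1 C where "0 < c1" "c1 < a / 2" "0 < C"
    and decay: "\<And>s. 0 \<le> s \<Longrightarrow> L * exp (- a / 2 * s) \<le> C * exp (- c1 * s)"
      "\<And>s. 0 \<le> s \<Longrightarrow> (L * exp (- a / 2 * s)) powr (p - q) * \<Lambda> \<le> (C * exp (- c1 * s)) powr p"
    using exists_decay_constants[OF \<open>0 < a\<close> \<open>0 < q\<close> \<open>q < p\<close> \<open>0 \<le> L\<close> \<open>0 \<le> \<Lambda>\<close>] by blast
  have "0 \<le> vstar \<omega> v * t" if "0 \<le> t" for v :: "nat \<Rightarrow> 'a" and t
    using vstar_nonneg[of \<omega> v] \<omega> that by (simp add: less_imp_le)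
  then show thesis
    using that[OF \<open>0 < c1\<close> \<open>c1 < a / 2\<close> \<open>0 < C\<close>] order_trans[OF sup decay(1)]
      order_trans[OF Lp ennreal_leI[OF decay(2)]] by blast
qed

end

lemma bound_state_pos: "bound_state g \<phi> \<omega> \<Longrightarrow> 0 < \<omega>"
  unfolding bound_state_def by simp

lemma bound_state_continuous: "bound_state g \<phi> \<omega> \<Longrightarrow> continuous_on UNIV \<phi>"
  unfolding bound_state_def C2fun_def
  by (auto intro!: differentiable_imp_continuous_on simp: differentiable_on_def differentiable_at_withinI)

lemma T1_profile_bound:
  assumes "T1 \<phi> \<omega> \<alpha>1 a r0"
  obtains D where "0 < D"
    and "\<And>j x. cmod (\<phi> j x) \<le> D * \<omega> j powr (1/\<alpha>1) * exp (- a * sqrt (\<omega> j) * norm x)"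
proof -
  obtain D where "0 < D" and D: "\<And>j x. cmod (\<phi> j x) + \<omega> j powr (-1/2) * gradnorm (\<phi> j) x
      \<le> D * \<omega> j powr (1/\<alpha>1) * exp (- a * sqrt (\<omega> j) * norm x)"
    using assms unfolding T1_def by blast
  have "0 \<le> \<omega> j powr (-1/2) * gradnorm (\<phi> j) x" for j x
    unfolding gradnorm_def by (intro mult_nonneg_nonneg powr_ge_zero real_sqrt_ge_zero sum_nonneg) simp
  with D show thesis by (intro that[OF \<open>0 < D\<close>]) (smt (verit))
qed

lemma T1_summable_amplitudes:
  assumes "T1 (\<phi> :: nat \<Rightarrow> 'a::euclidean_space \<Rightarrow> complex) \<omega> \<alpha>1 a r0" and "0 < \<alpha>1" and "\<And>j. 0 \<le> \<omega> j"
  shows "summable (\<lambda>j. \<omega> j powr (1/\<alpha>1))"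
proof -
  have "1 \<le> r0" and "real DIM('a) * \<alpha>1 / 2 < r0"
    and "summable (\<lambda>j. \<omega> j powr (1/\<alpha>1 - real DIM('a) / (2 * r0)))"
    using assms(1) unfolding T1_def by auto
  then show ?thesis
    using summable_powr_add_nonneg[of \<omega> "1/\<alpha>1 - real DIM('a) / (2 * r0)" "real DIM('a) / (2 * r0)"] assms(2,3)
    by (simp add: field_simps)
qed

lemma interpolation_exponent_less:
  fixes \<alpha>1 \<alpha>2 r :: real
  assumes "0 < \<alpha>1" and "\<alpha>1 \<le> \<alpha>2" and "0 < r" and "1 < (\<alpha>1 + 1) / r + 1 / (2 + \<alpha>2)"
  shows "r / (1 + \<alpha>1) < (2 + \<alpha>2) / (1 + \<alpha>2)"
proof -
  have "(1 + \<alpha>2) / (2 + \<alpha>2) = 1 - 1 / (2 + \<alpha>2)"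
    using assms(1,2) by (simp add: field_simps)
  then have "(1 + \<alpha>2) / (2 + \<alpha>2) < (\<alpha>1 + 1) / r"
    using assms(4) by simp
  then have "(1 + \<alpha>2) * r < (\<alpha>1 + 1) * (2 + \<alpha>2)"
    using assms(1-3) by (simp add: field_simps)
  then show ?thesis
    using assms(1,2) by (simp add: field_simps)
qed

theorem mainTheorem8:
  fixes g :: "real \<Rightarrow> real" and \<alpha>1 \<alpha>2 r0 a :: real
    and \<phi> :: "nat \<Rightarrow> 'a::euclidean_space \<Rightarrow> complex" and \<omega> :: "nat \<Rightarrow> real"
  assumes "F0 DIM('a) g \<alpha>1 \<alpha>2"
    and "\<alpha>2 / (2 + \<alpha>2) \<le> \<alpha>1"
    and "max 1 (real DIM('a) * \<alpha>1 / 2) < r0" and "r0 < 2 + \<alpha>1"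
    and "1/2 \<le> \<alpha>1 / r0 + 1 / (2 + \<alpha>2)"
    and "1 < (\<alpha>1 + 1) / r0 + 1 / (2 + \<alpha>2)"
    and "\<forall>j. bound_state g (\<phi> j) (\<omega> j)"
    and "T1 \<phi> \<omega> \<alpha>1 a r0"
  shows "\<exists>c1 C. 0 < c1 \<and> c1 < a / 2 \<and> 0 < C \<and>
    (\<forall>(v :: nat \<Rightarrow> 'a) (\<gamma> :: nat \<Rightarrow> real) (t :: real). 0 < t \<longrightarrow>
       (let H = source g \<phi> \<omega> v \<gamma> t;
            B = C * exp (- c1 * vstar \<omega> v * t);
            p = (2 + \<alpha>2) / (1 + \<alpha>2)
        in (AE x in lebesgue. cmod (H x) \<le> B) \<and>
           H \<in> borel_measurable lebesgue \<and>
           (\<integral>\<^sup>+ x. ennreal (cmod (H x) powr p) \<partial>lebesgue) \<le> ennreal (B powr p)))"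
proof -
  have "0 < \<alpha>1" "\<alpha>1 \<le> \<alpha>2" "continuous_on {0..} g" using assms(1) unfolding F0_def by auto
  have "0 < a" "1 \<le> r0" "real DIM('a) * \<alpha>1 / 2 < r0"
    "summable (\<lambda>j. \<omega> j powr (1/\<alpha>1 - real DIM('a) / (2 * r0)))"
    using assms(8) unfolding T1_def by auto
  obtain D where "0 < D" and profile:
      "\<And>j x. cmod (\<phi> j x) \<le> D * \<omega> j powr (1/\<alpha>1) * exp (- a * sqrt (\<omega> j) * norm x)"
    using T1_profile_bound[OF assms(8)] by blast
  have \<omega>: "\<And>j. 0 < \<omega> j" and "\<And>j. continuous_on UNIV (\<phi> j)"
    using assms(7) by (blast intro: bound_state_pos bound_state_continuous)+
  define p where "p = (2 + \<alpha>2) / (1 + \<alpha>2)"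
  define q where "q = r0 / (1 + \<alpha>1)"
  have "0 < q" "q < p" "(1 + \<alpha>1) * q = r0"
    unfolding p_def q_def using interpolation_exponent_less[OF _ _ _ assms(6)] \<open>0 < \<alpha>1\<close> \<open>\<alpha>1 \<le> \<alpha>2\<close> \<open>1 \<le> r0\<close>
    by auto
  obtain c1 C where "0 < c1" "c1 < a / 2" "0 < C"
    and sup: "\<And>v \<gamma> t x. 0 \<le> t \<Longrightarrow> cmod (source g \<phi> \<omega> v \<gamma> t x) \<le> C * exp (- c1 * (vstar \<omega> v * t))"
    and Lp: "\<And>v \<gamma> t. 0 \<le> t \<Longrightarrow> (\<integral>\<^sup>+x. ennreal (cmod (source g \<phi> \<omega> v \<gamma> t x) powr p) \<partial>lebesgue)
      \<le> ennreal ((C * exp (- c1 * (vstar \<omega> v * t))) powr p)"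
    using source_exponential_decay[OF assms(1) \<omega> \<open>0 < a\<close> less_imp_le[OF \<open>0 < D\<close>] profile
        T1_summable_amplitudes[OF assms(8) \<open>0 < \<alpha>1\<close>] \<open>1 \<le> r0\<close> \<open>real DIM('a) * \<alpha>1 / 2 < r0\<close>
        \<open>summable _\<close> \<open>0 < q\<close> \<open>q < p\<close> \<open>(1 + \<alpha>1) * q = r0\<close>] \<omega>
    by (metis less_imp_le)
  show ?thesis
    unfolding Let_def p_def[symmetric]
    by (rule exI[of _ c1], rule exI[of _ C])
      (use \<open>0 < c1\<close> \<open>c1 < a / 2\<close> \<open>0 < C\<close> sup Lp source_measurable[OF \<open>continuous_on {0..} g\<close>
        \<open>\<And>j. continuous_on UNIV (\<phi> j)\<close>] in \<open>auto intro: AE_I2 simp: mult.assoc\<close>)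
qed

end
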